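(* Let $\mathcal{H},\mathcal{K}$ be complex Hilbert spaces and $(f_*,f^* ):(\mathsf{P}(\mathcal{H}),\mathsf{L}(\mathcal{H}),\bar e_{\mathcal{H}})\to(\mathsf{P}(\mathcal{K}),\mathsf{L}(\mathcal{K}),\bar e_{\mathcal{K}})$ a Chu morphism with $f_*$ injective. Then for all nonzero $\phi,\psi\in\mathcal{H}$: $\phi\perp\psi$ if and only if the rays $f_*([\phi])$ and $f_*([\psi])$ are orthogonal.
   Context: A Chu morphism $(X,A,e)\to(X',A',e')$ between Chu spaces over $[0,1]$ is a pair $(f_*:X\to X',f^*:A'\to A)$ with $e(x,f^*(a'))=e'(f_*(x),a')$ for all $x\in X,a'\in A'$. For a complex Hilbert space $\mathcal{H}$: $\mathsf{L}(\mathcal{H})$ is the set of closed subspaces, $P_S$ the orthogonal projector onto $S$, $\mathsf{P}(\mathcal{H})$ the set of rays $[\psi]=\{\lambda\psi:\lambda\in\mathbb{C}\}$, $\psi\ne0$, and $\bar e_{\mathcal{H}}([\psi],S)=\|P_S\psi\|^2/\|\psi\|^2$. *)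

theory Defs
  imports "HOL-Analysis.Analysis"
begin

text \<open>A complex Hilbert space: a real Banach space carrying a complex scalar
multiplication compatible with the real one, and a complex inner product
(linear in the second argument, conjugate symmetric) inducing the norm.\<close>

class chilbert = banach +
  fixes scaleC :: "complex \<Rightarrow> 'a \<Rightarrow> 'a"
    and cinner :: "'a \<Rightarrow> 'a \<Rightarrow> complex"
  assumes scaleC_add_right: "scaleC c (x + y) = scaleC c x + scaleC c y"
    and scaleC_add_left: "scaleC (a + b) x = scaleC a x + scaleC b x"
    and scaleC_scaleC: "scaleC a (scaleC b x) = scaleC (a * b) x"
    and scaleC_one: "scaleC 1 x = x"
    and scaleC_of_real: "scaleC (complex_of_real r) x = scaleR r x"
    and cinner_add_right: "cinner x (y + z) = cinner x y + cinner x z"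
    and cinner_scaleC_right: "cinner x (scaleC c y) = c * cinner x y"
    and cinner_commute: "cinner y x = cnj (cinner x y)"
    and cinner_self_norm: "cinner x x = complex_of_real ((norm x)\<^sup>2)"

definition closed_csubspace :: "'a::chilbert set \<Rightarrow> bool" where
  "closed_csubspace S \<longleftrightarrow> 0 \<in> S \<and> (\<forall>x\<in>S. \<forall>y\<in>S. x + y \<in> S)
     \<and> (\<forall>c. \<forall>x\<in>S. scaleC c x \<in> S) \<and> closed S"

definition subspaces_L :: "'a::chilbert set set" where
  "subspaces_L = {S. closed_csubspace S}"

definition proj :: "'a::chilbert set \<Rightarrow> 'a \<Rightarrow> 'a" where
  "proj S \<psi> = (THE y. y \<in> S \<and> (\<forall>z\<in>S. cinner z (\<psi> - y) = 0))"

definition ray :: "'a::chilbert \<Rightarrow> 'a set" where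
  "ray \<psi> = {scaleC c \<psi> | c. True}"

definition rays_P :: "'a::chilbert set set" where
  "rays_P = {ray \<psi> | \<psi>. \<psi> \<noteq> 0}"

text \<open>Evaluation \<open>e([\<psi>],S) = \<parallel>P_S \<psi>\<parallel>\<^sup>2 / \<parallel>\<psi>\<parallel>\<^sup>2\<close>, computed with a nonzero
representative of the ray (independent of the choice).\<close>
definition rep :: "'a::chilbert set \<Rightarrow> 'a" where
  "rep r = (SOME \<psi>. \<psi> \<in> r \<and> \<psi> \<noteq> 0)"

definition ebar :: "'a::chilbert set \<Rightarrow> 'a set \<Rightarrow> real" where
  "ebar r S = (norm (proj S (rep r)))\<^sup>2 / (norm (rep r))\<^sup>2"

definition chu_morphism ::
  "'x set \<Rightarrow> 'a set \<Rightarrow> ('x \<Rightarrow> 'a \<Rightarrow> real) \<Rightarrow> 'y set \<Rightarrow> 'b set \<Rightarrow> ('y \<Rightarrow> 'b \<Rightarrow> real)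
   \<Rightarrow> ('x \<Rightarrow> 'y) \<Rightarrow> ('b \<Rightarrow> 'a) \<Rightarrow> bool" where
  "chu_morphism X A e X' A' e' fs fa \<longleftrightarrow>
     (\<forall>x\<in>X. fs x \<in> X') \<and> (\<forall>a'\<in>A'. fa a' \<in> A) \<and>
     (\<forall>x\<in>X. \<forall>a'\<in>A'. e x (fa a') = e' (fs x) a')"

definition rays_orth :: "'a::chilbert set \<Rightarrow> 'a set \<Rightarrow> bool" where
  "rays_orth r s \<longleftrightarrow> (\<forall>u\<in>r. \<forall>v\<in>s. cinner u v = 0)"

end

theory Submission imports Defs begin

text \<open>Put \<open>A = f\<^sup>*(f\<^sub>*[\<psi>])\<close>. For a ray \<open>r\<close> and a closed subspace \<open>S\<close>, \<open>e(r,S) = 1\<close> iff \<open>r \<subseteq> S\<close> and \<open>e(r,S) = 0\<close> iff \<open>r \<perp> S\<close>. The Chu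
condition therefore says that \<open>[x] \<subseteq> A\<close> iff \<open>f\<^sub>*[x] = f\<^sub>*[\<psi>]\<close>, so by injectivity
\<open>A = [\<psi>]\<close>. Applying the Chu condition once more,
\<open>\<phi> \<perp> \<psi> \<longleftrightarrow> e([\<phi>],A) = 0 \<longleftrightarrow> e(f\<^sub>*[\<phi>], f\<^sub>*[\<psi>]) = 0 \<longleftrightarrow> f\<^sub>*[\<phi>] \<perp> f\<^sub>*[\<psi>]\<close>.
The only analytic input is the existence of orthogonal projections, obtained from
nearest points via the parallelogram law and completeness.\<close>

section \<open>Algebra of complex Hilbert spaces\<close>

lemma scaleC_zero_left [simp]: "scaleC 0 (x::'a::chilbert) = 0"
  using scaleC_of_real[of 0 x] by simp

lemma scaleC_minus1: "scaleC (-1) (x::'a::chilbert) = - x"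
  using scaleC_of_real[of "-1" x] by simp

lemma scaleC_zero_right [simp]: "scaleC c (0::'a::chilbert) = 0"
  using scaleC_add_right[of c 0 0] by simp

lemma cinner_add_left: "cinner ((x::'a::chilbert) + y) z = cinner x z + cinner y z"
proof -
  have "cinner (x + y) z = cnj (cinner z x) + cnj (cinner z y)"
    by (simp only: cinner_commute[of "x + y" z] cinner_add_right complex_cnj_add)
  then show ?thesis by (simp only: cinner_commute[of x z] cinner_commute[of y z])
qed

lemma cinner_scaleC_left: "cinner (scaleC c (x::'a::chilbert)) y = cnj c * cinner x y"
proof -
  have "cinner (scaleC c x) y = cnj c * cnj (cinner y x)"
    by (simp only: cinner_commute[of "scaleC c x" y] cinner_scaleC_right complex_cnj_mult)
  then show ?thesis by (simp only: cinner_commute[of x y])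
qed

lemma cinner_zero_right [simp]: "cinner (x::'a::chilbert) 0 = 0"
  using cinner_add_right[of x 0 0] by simp

lemma cinner_zero_left [simp]: "cinner 0 (x::'a::chilbert) = 0"
  using cinner_add_left[of 0 0 x] by simp

lemma cinner_minus_right: "cinner (x::'a::chilbert) (- y) = - cinner x y"
  using cinner_scaleC_right[of x "-1" y] by (simp add: scaleC_minus1)

lemma cinner_diff_right: "cinner (x::'a::chilbert) (y - z) = cinner x y - cinner x z"
  by (simp only: diff_conv_add_uminus cinner_add_right cinner_minus_right)

lemma cinner_eq_zero_commute: "cinner (x::'a::chilbert) y = 0 \<longleftrightarrow> cinner y x = 0"
  by (subst cinner_commute) simp

lemma cinner_self_eq_0: "cinner (x::'a::chilbert) x = 0 \<longleftrightarrow> x = 0"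
  by (simp add: cinner_self_norm)

lemma norm_scaleC: "norm (scaleC c (x::'a::chilbert)) = cmod c * norm x"
proof -
  have "complex_of_real ((norm (scaleC c x))\<^sup>2) = cinner (scaleC c x) (scaleC c x)"
    by (rule cinner_self_norm[symmetric])
  also have "\<dots> = cnj c * (c * cinner x x)"
    by (simp add: cinner_scaleC_left cinner_scaleC_right)
  also have "\<dots> = (c * cnj c) * complex_of_real ((norm x)\<^sup>2)"
    by (simp only: cinner_self_norm[of x] mult_ac)
  also have "\<dots> = complex_of_real ((cmod c * norm x)\<^sup>2)"
    by (simp only: complex_norm_square[symmetric] power_mult_distrib of_real_mult)
  finally have "(norm (scaleC c x))\<^sup>2 = (cmod c * norm x)\<^sup>2"
    using of_real_eq_iff by blast
  then show ?thesis by simp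
qed

lemma norm_add_sq:
  "(norm ((x::'a::chilbert) + y))\<^sup>2 = (norm x)\<^sup>2 + (norm y)\<^sup>2 + 2 * Re (cinner x y)"
proof -
  have "cinner (x + y) (x + y) = cinner x x + cinner y y + (cinner x y + cnj (cinner x y))"
    by (simp add: cinner_add_left cinner_add_right cinner_commute[of x y])
  then have "Re (cinner (x + y) (x + y)) = Re (cinner x x) + Re (cinner y y) + 2 * Re (cinner x y)"
    by simp
  then show ?thesis by (simp add: cinner_self_norm)
qed

lemma norm_diff_sq:
  "(norm ((x::'a::chilbert) - y))\<^sup>2 = (norm x)\<^sup>2 + (norm y)\<^sup>2 - 2 * Re (cinner x y)"
  using norm_add_sq[of x "- y"] by (simp add: cinner_minus_right)

lemma parallelogram_law:
  "(norm ((u::'a::chilbert) - v))\<^sup>2 + (norm (u + v))\<^sup>2 = 2 * (norm u)\<^sup>2 + 2 * (norm v)\<^sup>2"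
  by (simp add: norm_add_sq norm_diff_sq)

lemma apollonius_identity:
  fixes \<psi> a b :: "'a::chilbert"
  shows "(norm (a - b))\<^sup>2 + 4 * (norm (\<psi> - scaleR (1/2) (a + b)))\<^sup>2
       = 2 * (norm (\<psi> - a))\<^sup>2 + 2 * (norm (\<psi> - b))\<^sup>2"
proof -
  have "(\<psi> - b) + (\<psi> - a) = scaleR 2 (\<psi> - scaleR (1/2) (a + b))"
    by (simp add: scaleR_2 algebra_simps)
  then show ?thesis
    using parallelogram_law[of "\<psi> - b" "\<psi> - a"] by (simp add: power_mult_distrib)
qed

lemma norm_sq_diff_line_component:
  fixes r z :: "'a::chilbert"
  assumes "z \<noteq> 0"
  shows "(norm (r - scaleC (cinner z r / complex_of_real ((norm z)\<^sup>2)) z))\<^sup>2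
       = (norm r)\<^sup>2 - (cmod (cinner z r))\<^sup>2 / (norm z)\<^sup>2"
proof -
  define t where "t = cinner z r / complex_of_real ((norm z)\<^sup>2)"
  have "cmod t = cmod (cinner z r) / (norm z)\<^sup>2"
    by (simp add: t_def norm_divide norm_power)
  then have "cmod t * norm z = cmod (cinner z r) / norm z"
    using assms by (simp add: power2_eq_square)
  then have scaled: "(norm (scaleC t z))\<^sup>2 = (cmod (cinner z r))\<^sup>2 / (norm z)\<^sup>2"
    by (simp only: norm_scaleC power_divide)
  have "cinner r (scaleC t z) = cinner z r * cnj (cinner z r) / complex_of_real ((norm z)\<^sup>2)"
    by (simp add: t_def cinner_scaleC_right cinner_commute[of r z])
  also have "\<dots> = complex_of_real ((cmod (cinner z r))\<^sup>2 / (norm z)\<^sup>2)"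
    by (simp only: complex_norm_square[symmetric] of_real_divide)
  finally have cross: "Re (cinner r (scaleC t z)) = (cmod (cinner z r))\<^sup>2 / (norm z)\<^sup>2"
    by simp
  show ?thesis unfolding t_def[symmetric] norm_diff_sq scaled cross by simp
qed

lemma cauchy_schwarz: "cmod (cinner (x::'a::chilbert) y) \<le> norm x * norm y"
proof (cases "x = 0")
  case False
  have "0 \<le> (norm y)\<^sup>2 - (cmod (cinner x y))\<^sup>2 / (norm x)\<^sup>2"
    using norm_sq_diff_line_component[OF False, of y] by (metis zero_le_power2)
  then have "(cmod (cinner x y))\<^sup>2 \<le> (norm x * norm y)\<^sup>2"
    using False by (simp add: field_simps)
  then show ?thesis by (simp add: power2_le_iff_abs_le)
qed simp

lemma bounded_linear_cinner_right: "bounded_linear (cinner (w::'a::chilbert))"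
proof (rule bounded_linear_intro[where K = "norm w"])
  show "cinner w (scaleR r x) = scaleR r (cinner w x)" for r x
    using cinner_scaleC_right[of w "complex_of_real r" x]
    by (simp only: scaleC_of_real scaleR_conv_of_real)
  show "norm (cinner w x) \<le> norm x * norm w" for x
    using cauchy_schwarz[of w x] by (simp only: norm_complex_def mult.commute)
qed (rule cinner_add_right)

lemma bounded_linear_scaleC_left: "bounded_linear (\<lambda>c. scaleC c (w::'a::chilbert))"
proof (rule bounded_linear_intro[where K = "norm w"])
  show "scaleC (scaleR r c) w = scaleR r (scaleC c w)" for r c
    by (simp only: scaleR_conv_of_real scaleC_scaleC[symmetric] scaleC_of_real)
qed (simp_all add: scaleC_add_left norm_scaleC)

section \<open>Orthogonal projection onto a closed subspace\<close>

lemma closed_csubspaceD: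
  assumes "closed_csubspace (A::'a::chilbert set)"
  shows "0 \<in> A" "x \<in> A \<Longrightarrow> y \<in> A \<Longrightarrow> x + y \<in> A" "x \<in> A \<Longrightarrow> scaleC c x \<in> A" "closed A"
  using assms unfolding closed_csubspace_def by auto

lemma closed_csubspace_diff:
  assumes "closed_csubspace (A::'a::chilbert set)" "x \<in> A" "y \<in> A"
  shows "x - y \<in> A"
proof -
  have "x + scaleC (-1) y \<in> A" using assms closed_csubspaceD(2,3)[OF assms(1)] by blast
  then show ?thesis by (simp add: scaleC_minus1)
qed

lemma closed_csubspace_scaleR:
  assumes "closed_csubspace (A::'a::chilbert set)" "x \<in> A"
  shows "scaleR r x \<in> A"
  using closed_csubspaceD(3)[OF assms, of "complex_of_real r"] by (simp only: scaleC_of_real)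

lemma Cauchy_of_mutual_bound:
  fixes a :: "nat \<Rightarrow> 'a::real_normed_vector"
  assumes bound: "\<And>m n. norm (a m - a n) \<le> d m + d n" and "d \<longlonglongrightarrow> 0"
  shows "Cauchy a"
proof (rule CauchyI)
  fix e :: real assume "0 < e"
  then have "e / 2 > 0" by simp
  then obtain M where M: "\<forall>n\<ge>M. dist (d n) 0 < e / 2"
    using \<open>d \<longlonglongrightarrow> 0\<close> unfolding lim_sequentially by blast
  have "norm (a m - a n) < e" if "m \<ge> M" "n \<ge> M" for m n
  proof -
    have "d m < e / 2" "d n < e / 2" using M that by (auto simp: dist_real_def)
    then show ?thesis using bound[of m n] by linarith
  qed
  then show "\<exists>M. \<forall>m\<ge>M. \<forall>n\<ge>M. norm (a m - a n) < e" by blast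
qed

lemma minimizing_sequence_Cauchy:
  fixes A :: "'a::chilbert set"
  assumes A: "closed_csubspace A" and D_le: "\<And>a. a \<in> A \<Longrightarrow> D \<le> (norm (\<psi> - a))\<^sup>2"
    and aA: "\<And>n. a n \<in> A" and af: "\<And>n. (norm (\<psi> - a n))\<^sup>2 < D + inverse (real (Suc n))"
  shows "Cauchy a"
proof (rule Cauchy_of_mutual_bound)
  define d where "d n = sqrt (2 * inverse (real (Suc n)))" for n
  show "norm (a m - a n) \<le> d m + d n" for m n
  proof -
    have "scaleR (1/2) (a m + a n) \<in> A"
      by (intro closed_csubspace_scaleR[OF A] closed_csubspaceD(2)[OF A] aA)
    then have "4 * D \<le> 4 * (norm (\<psi> - scaleR (1/2) (a m + a n)))\<^sup>2" using D_le by simp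
    with apollonius_identity[of "a m" "a n" \<psi>] af[of m] af[of n]
    have "(norm (a m - a n))\<^sup>2 \<le> 2 * inverse (real (Suc m)) + 2 * inverse (real (Suc n))"
      by linarith
    then have "norm (a m - a n) \<le> sqrt (2 * inverse (real (Suc m)) + 2 * inverse (real (Suc n)))"
      using real_le_rsqrt by blast
    also have "\<dots> \<le> d m + d n" unfolding d_def by (rule sqrt_add_le_add_sqrt) simp_all
    finally show ?thesis .
  qed
  have "(\<lambda>n. sqrt (2 * inverse (real (Suc n)))) \<longlonglongrightarrow> sqrt (2 * 0)"
    by (intro tendsto_real_sqrt tendsto_mult_left LIMSEQ_inverse_real_of_nat)
  then show "d \<longlonglongrightarrow> 0" unfolding d_def by simp
qed

lemma closed_csubspace_nearest_point:
  fixes A :: "'a::chilbert set"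
  assumes A: "closed_csubspace A"
  shows "\<exists>y\<in>A. \<forall>a\<in>A. norm (\<psi> - y) \<le> norm (\<psi> - a)"
proof -
  define f where "f a = (norm (\<psi> - a))\<^sup>2" for a
  define D where "D = Inf (f ` A)"
  have bdd: "bdd_below (f ` A)" by (rule bdd_belowI[of _ 0]) (auto simp: f_def)
  have D_le: "D \<le> f a" if "a \<in> A" for a
    unfolding D_def using bdd that by (auto intro: cInf_lower)
  have "\<exists>a. a \<in> A \<and> f a < D + inverse (real (Suc n))" for n
  proof -
    have "f ` A \<noteq> {}" "D < D + inverse (real (Suc n))" using closed_csubspaceD(1)[OF A] by auto
    then show ?thesis using cInf_lessD[of "f ` A"] unfolding D_def by blast
  qed
  then have "\<exists>a. \<forall>n. a n \<in> A \<and> f (a n) < D + inverse (real (Suc n))" by (intro choice allI)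
  then obtain a where aA: "\<And>n. a n \<in> A" and af: "\<And>n. f (a n) < D + inverse (real (Suc n))"
    by blast
  have "Cauchy a" using D_le af unfolding f_def by (rule minimizing_sequence_Cauchy[OF A _ aA])
  then have "convergent a" by (rule Cauchy_convergent)
  then obtain y where lim: "a \<longlonglongrightarrow> y" unfolding convergent_def by blast
  have "y \<in> A" using closed_sequentially[OF closed_csubspaceD(4)[OF A] aA lim] .
  moreover have "f y \<le> D"
  proof (rule LIMSEQ_le)
    show "(\<lambda>n. f (a n)) \<longlonglongrightarrow> f y" unfolding f_def by (intro tendsto_intros lim)
    show "(\<lambda>n. D + inverse (real (Suc n))) \<longlonglongrightarrow> D"
      using tendsto_add[OF tendsto_const LIMSEQ_inverse_real_of_nat, of D] by simp
    show "\<exists>N. \<forall>n\<ge>N. f (a n) \<le> D + inverse (real (Suc n))"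
      using af less_imp_le by blast
  qed
  moreover have "norm (\<psi> - y) \<le> norm (\<psi> - a)" if "a \<in> A" for a
  proof (rule power2_le_imp_le)
    show "(norm (\<psi> - y))\<^sup>2 \<le> (norm (\<psi> - a))\<^sup>2"
      using \<open>f y \<le> D\<close> D_le[OF that] unfolding f_def by linarith
  qed simp
  ultimately show ?thesis by blast
qed

lemma nearest_point_orthogonal:
  fixes A :: "'a::chilbert set"
  assumes A: "closed_csubspace A" and "y \<in> A"
    and nearest: "\<forall>a\<in>A. norm (\<psi> - y) \<le> norm (\<psi> - a)" and "z \<in> A"
  shows "cinner z (\<psi> - y) = 0"
proof (cases "z = 0")
  case False
  define t where "t = cinner z (\<psi> - y) / complex_of_real ((norm z)\<^sup>2)"
  have "y + scaleC t z \<in> A" by (intro closed_csubspaceD[OF A] \<open>y \<in> A\<close> \<open>z \<in> A\<close>)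
  then have "norm (\<psi> - y) \<le> norm ((\<psi> - y) - scaleC t z)"
    using nearest by (simp add: diff_diff_eq)
  then have "(norm (\<psi> - y))\<^sup>2 \<le> (norm ((\<psi> - y) - scaleC t z))\<^sup>2"
    by (simp add: power_mono)
  moreover have "(norm ((\<psi> - y) - scaleC t z))\<^sup>2
      = (norm (\<psi> - y))\<^sup>2 - (cmod (cinner z (\<psi> - y)))\<^sup>2 / (norm z)\<^sup>2"
    unfolding t_def by (rule norm_sq_diff_line_component[OF False])
  ultimately have "(cmod (cinner z (\<psi> - y)))\<^sup>2 / (norm z)\<^sup>2 \<le> 0" by linarith
  then have "(cmod (cinner z (\<psi> - y)))\<^sup>2 \<le> 0"
    using False by (simp add: divide_le_0_iff)
  then show ?thesis by simp
qed simp

lemma proj_ex1: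
  fixes A :: "'a::chilbert set"
  assumes A: "closed_csubspace A"
  shows "\<exists>!y. y \<in> A \<and> (\<forall>z\<in>A. cinner z (\<psi> - y) = 0)"
proof -
  obtain y where "y \<in> A" "\<forall>a\<in>A. norm (\<psi> - y) \<le> norm (\<psi> - a)"
    using closed_csubspace_nearest_point[OF A] by blast
  then have y: "y \<in> A" "\<forall>z\<in>A. cinner z (\<psi> - y) = 0"
    using nearest_point_orthogonal[OF A] by blast+
  show ?thesis
  proof (rule ex1I[of _ y])
    fix y' assume y': "y' \<in> A \<and> (\<forall>z\<in>A. cinner z (\<psi> - y') = 0)"
    have "y' - y \<in> A" using closed_csubspace_diff[OF A] y(1) y' by blast
    then have "cinner (y' - y) ((\<psi> - y) - (\<psi> - y')) = 0"
      using y(2) y' by (simp add: cinner_diff_right)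
    then show "y' = y" by (simp add: cinner_self_eq_0)
  qed (use y in blast)
qed

lemma
  fixes A :: "'a::chilbert set"
  assumes A: "closed_csubspace A"
  shows proj_in: "proj A \<psi> \<in> A"
    and proj_orthogonal: "z \<in> A \<Longrightarrow> cinner z (\<psi> - proj A \<psi>) = 0"
  using theI'[OF proj_ex1[OF A, of \<psi>]] unfolding proj_def[symmetric] by blast+

lemma proj_unique:
  fixes A :: "'a::chilbert set"
  assumes A: "closed_csubspace A" and "y \<in> A" "\<forall>z\<in>A. cinner z (\<psi> - y) = 0"
  shows "proj A \<psi> = y"
  unfolding proj_def by (rule the1_equality[OF proj_ex1[OF A]]) (use assms in blast)

lemma pythagoras_proj:
  fixes A :: "'a::chilbert set"
  assumes A: "closed_csubspace A"
  shows "(norm \<psi>)\<^sup>2 = (norm (proj A \<psi>))\<^sup>2 + (norm (\<psi> - proj A \<psi>))\<^sup>2"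
  using norm_add_sq[of "proj A \<psi>" "\<psi> - proj A \<psi>"] proj_orthogonal[OF A proj_in[OF A]] by simp

lemma proj_eq_self_iff:
  assumes A: "closed_csubspace (A::'a::chilbert set)"
  shows "proj A u = u \<longleftrightarrow> u \<in> A"
  using proj_in[OF A, of u] proj_unique[OF A, of u u] by fastforce

lemma proj_eq_0_iff:
  assumes A: "closed_csubspace (A::'a::chilbert set)"
  shows "proj A u = 0 \<longleftrightarrow> (\<forall>z\<in>A. cinner z u = 0)"
  using proj_orthogonal[OF A, of _ u] proj_unique[OF A closed_csubspaceD(1)[OF A], of u] by auto

section \<open>Rays and the evaluation \<open>ebar\<close>\<close>

lemma in_ray_iff: "x \<in> ray \<psi> \<longleftrightarrow> (\<exists>c. x = scaleC c \<psi>)"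
  unfolding ray_def by blast

lemma in_ray_self: "(\<psi>::'a::chilbert) \<in> ray \<psi>"
  unfolding in_ray_iff using scaleC_one[of \<psi>] by (intro exI[of _ 1]) simp

lemma ray_scaleC:
  assumes "c \<noteq> 0"
  shows "ray (scaleC c (w::'a::chilbert)) = ray w"
proof (rule set_eqI)
  fix x
  show "x \<in> ray (scaleC c w) \<longleftrightarrow> x \<in> ray w"
    unfolding in_ray_iff
  proof
    assume "\<exists>d. x = scaleC d (scaleC c w)"
    then show "\<exists>d. x = scaleC d w" by (auto simp: scaleC_scaleC)
  next
    assume "\<exists>d. x = scaleC d w"
    then obtain d where "x = scaleC d w" by blast
    then have "x = scaleC (d / c) (scaleC c w)" using assms by (simp add: scaleC_scaleC)
    then show "\<exists>d. x = scaleC d (scaleC c w)" by blast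
  qed
qed

lemma closed_csubspace_ray: "closed_csubspace (ray (w::'a::chilbert))"
proof (cases "w = 0")
  case True
  then have "ray w = {0}" unfolding ray_def by simp
  then show ?thesis unfolding closed_csubspace_def by simp
next
  case False
  define k where "k = complex_of_real ((norm w)\<^sup>2)"
  have k: "k \<noteq> 0" using False by (simp add: k_def)
  define w' where "w' = scaleC (1 / k) w"
  have eq: "ray w = {y. y = ((\<lambda>c. scaleC c w') \<circ> cinner w) y}"
  proof (rule set_eqI, rule iffI)
    fix y assume "y \<in> ray w"
    then obtain c where y: "y = scaleC c w" unfolding in_ray_iff by blast
    have "cinner w y = c * k" by (simp add: y cinner_scaleC_right cinner_self_norm k_def)
    then show "y \<in> {y. y = ((\<lambda>c. scaleC c w') \<circ> cinner w) y}"
      using k by (simp add: y w'_def scaleC_scaleC)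
  next
    fix y assume "y \<in> {y. y = ((\<lambda>c. scaleC c w') \<circ> cinner w) y}"
    then have "y = scaleC (cinner w y * (1 / k)) w" by (simp add: w'_def scaleC_scaleC)
    then show "y \<in> ray w" unfolding in_ray_iff by blast
  qed
  have "bounded_linear ((\<lambda>c. scaleC c w') \<circ> cinner w)"
    using bounded_linear_compose[OF bounded_linear_scaleC_left bounded_linear_cinner_right]
    by (simp only: comp_def)
  then have "closed (ray w)"
    unfolding eq by (rule closed_Collect_eq[OF continuous_on_id linear_continuous_on])
  moreover have "x + y \<in> ray w" if xy: "x \<in> ray w" "y \<in> ray w" for x y
  proof -
    obtain a b where "x = scaleC a w" "y = scaleC b w" using xy unfolding in_ray_iff by blast
    then have "x + y = scaleC (a + b) w" by (simp only: scaleC_add_left)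
    then show ?thesis unfolding in_ray_iff by blast
  qed
  moreover have "scaleC c x \<in> ray w" if x: "x \<in> ray w" for c x
  proof -
    obtain a where "x = scaleC a w" using x unfolding in_ray_iff by blast
    then have "scaleC c x = scaleC (c * a) w" by (simp only: scaleC_scaleC)
    then show ?thesis unfolding in_ray_iff by blast
  qed
  moreover have "0 \<in> ray w" unfolding in_ray_iff by (intro exI[of _ 0]) simp
  ultimately show ?thesis unfolding closed_csubspace_def by blast
qed

lemma ray_subset_iff:
  assumes S: "closed_csubspace (S::'a::chilbert set)"
  shows "ray u \<subseteq> S \<longleftrightarrow> u \<in> S"
proof
  assume "ray u \<subseteq> S"
  then show "u \<in> S" using in_ray_self by blast
next
  assume "u \<in> S"
  then show "ray u \<subseteq> S" unfolding ray_def using closed_csubspaceD(3)[OF S] by blast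
qed

lemma rays_P_subset_subspaces_L: "(rays_P :: 'a::chilbert set set) \<subseteq> subspaces_L"
  unfolding rays_P_def subspaces_L_def using closed_csubspace_ray by blast

lemma rays_PD:
  assumes "(r::'a::chilbert set) \<in> rays_P"
  shows "rep r \<noteq> 0" "r = ray (rep r)"
proof -
  obtain \<psi> where "\<psi> \<noteq> 0" and r: "r = ray \<psi>" using assms unfolding rays_P_def by blast
  then have "\<exists>u. u \<in> r \<and> u \<noteq> 0" using r in_ray_self by blast
  then have rep: "rep r \<in> r \<and> rep r \<noteq> 0" unfolding rep_def by (rule someI_ex)
  then obtain c where c: "rep r = scaleC c \<psi>" using r in_ray_iff by blast
  with rep have "c \<noteq> 0" by auto
  with rep c r show "rep r \<noteq> 0" "r = ray (rep r)" by (simp_all add: ray_scaleC)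
qed

lemma ray_subset_ray:
  assumes "(r::'a::chilbert set) \<in> rays_P" "s \<in> rays_P" "r \<subseteq> s"
  shows "r = s"
proof -
  have "rep r \<in> ray (rep s)"
    using assms(3) in_ray_self[of "rep r"] rays_PD(2)[OF assms(1)] rays_PD(2)[OF assms(2)] by auto
  then obtain c where "rep r = scaleC c (rep s)" unfolding in_ray_iff by blast
  with rays_PD[OF assms(1)] have "c \<noteq> 0" "r = ray (scaleC c (rep s))" by auto
  then have "r = ray (rep s)" by (simp add: ray_scaleC)
  with rays_PD(2)[OF assms(2)] show ?thesis by simp
qed

lemma ebar_eq_1_iff:
  assumes r: "(r::'a::chilbert set) \<in> rays_P" and S: "S \<in> subspaces_L"
  shows "ebar r S = 1 \<longleftrightarrow> r \<subseteq> S"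
proof -
  have S: "closed_csubspace S" using S unfolding subspaces_L_def by blast
  define u where "u = rep r"
  have u: "u \<noteq> 0" "r = ray u" using rays_PD[OF r] unfolding u_def by simp_all
  have "ebar r S = 1 \<longleftrightarrow> (norm (proj S u))\<^sup>2 = (norm u)\<^sup>2"
    unfolding ebar_def u_def[symmetric] using u(1) by auto
  also have "\<dots> \<longleftrightarrow> (norm (u - proj S u))\<^sup>2 = 0"
    using pythagoras_proj[OF S, of u] by (smt (verit))
  also have "\<dots> \<longleftrightarrow> u \<in> S" using proj_eq_self_iff[OF S, of u] by auto
  finally show ?thesis using ray_subset_iff[OF S] u(2) by simp
qed

lemma ebar_eq_0_iff:
  assumes r: "(r::'a::chilbert set) \<in> rays_P" and S: "S \<in> subspaces_L"
  shows "ebar r S = 0 \<longleftrightarrow> rays_orth S r"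
proof -
  have S: "closed_csubspace S" using S unfolding subspaces_L_def by blast
  define u where "u = rep r"
  have u: "u \<noteq> 0" "r = ray u" using rays_PD[OF r] unfolding u_def by simp_all
  have "ebar r S = 0 \<longleftrightarrow> (\<forall>z\<in>S. cinner z u = 0)"
    unfolding ebar_def u_def[symmetric] using u(1) proj_eq_0_iff[OF S] by simp
  also have "\<dots> \<longleftrightarrow> rays_orth S (ray u)"
  proof
    assume "\<forall>z\<in>S. cinner z u = 0"
    then show "rays_orth S (ray u)"
      unfolding rays_orth_def by (auto simp: in_ray_iff cinner_scaleC_right)
  next
    assume "rays_orth S (ray u)"
    then show "\<forall>z\<in>S. cinner z u = 0" unfolding rays_orth_def using in_ray_self[of u] by blast
  qed
  finally show ?thesis using u(2) by simp
qed

lemma rays_orth_commute: "rays_orth r s \<longleftrightarrow> rays_orth s (r::'a::chilbert set)"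
  unfolding rays_orth_def using cinner_eq_zero_commute by blast

lemma rays_orth_ray_iff: "rays_orth (ray \<phi>) (ray \<psi>) \<longleftrightarrow> cinner (\<phi>::'a::chilbert) \<psi> = 0"
proof
  assume "rays_orth (ray \<phi>) (ray \<psi>)"
  then show "cinner \<phi> \<psi> = 0" unfolding rays_orth_def using in_ray_self by blast
next
  assume "cinner \<phi> \<psi> = 0"
  then show "rays_orth (ray \<phi>) (ray \<psi>)"
    unfolding rays_orth_def by (auto simp: in_ray_iff cinner_scaleC_left cinner_scaleC_right)
qed

section \<open>Chu morphisms between projective Hilbert spaces\<close>

lemma chu_morphism_pullback_image_ray:
  fixes fs :: "'h::chilbert set \<Rightarrow> 'k::chilbert set" and fa :: "'k set \<Rightarrow> 'h set"
  assumes chu: "chu_morphism (rays_P :: 'h set set) subspaces_L ebar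
                             (rays_P :: 'k set set) subspaces_L ebar fs fa"
    and inj: "inj_on fs rays_P" and "\<psi> \<noteq> 0"
  shows "fa (fs (ray \<psi>)) = ray \<psi>"
proof -
  have \<psi>P: "ray \<psi> \<in> rays_P" using \<open>\<psi> \<noteq> 0\<close> unfolding rays_P_def by blast
  have fsP: "fs r \<in> rays_P" if "r \<in> rays_P" for r
    using chu that unfolding chu_morphism_def by blast
  have fs\<psi>L: "fs (ray \<psi>) \<in> subspaces_L" using fsP[OF \<psi>P] rays_P_subset_subspaces_L by blast
  define A where "A = fa (fs (ray \<psi>))"
  have AL: "A \<in> subspaces_L" using chu fs\<psi>L unfolding chu_morphism_def A_def by blast
  then have A: "closed_csubspace A" unfolding subspaces_L_def by blast
  have subset_A: "r \<subseteq> A \<longleftrightarrow> r = ray \<psi>" if r: "r \<in> rays_P" for r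
  proof -
    have "r \<subseteq> A \<longleftrightarrow> ebar r A = 1" using ebar_eq_1_iff[OF r AL] by simp
    also have "\<dots> \<longleftrightarrow> ebar (fs r) (fs (ray \<psi>)) = 1"
      using chu r fs\<psi>L unfolding chu_morphism_def A_def by simp
    also have "\<dots> \<longleftrightarrow> fs r \<subseteq> fs (ray \<psi>)" by (rule ebar_eq_1_iff[OF fsP[OF r] fs\<psi>L])
    also have "\<dots> \<longleftrightarrow> fs r = fs (ray \<psi>)"
      using ray_subset_ray[OF fsP[OF r] fsP[OF \<psi>P]] by auto
    also have "\<dots> \<longleftrightarrow> r = ray \<psi>" using inj_on_eq_iff[OF inj r \<psi>P] .
    finally show ?thesis .
  qed
  have "x \<in> ray \<psi>" if "x \<in> A" for x
  proof (cases "x = 0")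
    case False
    then have "ray x \<in> rays_P" unfolding rays_P_def by blast
    moreover have "ray x \<subseteq> A" using ray_subset_iff[OF A] \<open>x \<in> A\<close> by blast
    ultimately have "ray x = ray \<psi>" using subset_A by blast
    then show ?thesis using in_ray_self[of x] by simp
  qed (simp add: closed_csubspaceD(1)[OF closed_csubspace_ray])
  then show ?thesis using subset_A[OF \<psi>P] unfolding A_def by blast
qed

theorem proposition3p7:
  fixes fs :: "'h::chilbert set \<Rightarrow> 'k::chilbert set"
    and fa :: "'k set \<Rightarrow> 'h set"
  assumes "chu_morphism (rays_P :: 'h set set) subspaces_L ebar
                        (rays_P :: 'k set set) subspaces_L ebar fs fa"
    and "inj_on fs rays_P"
  shows "\<forall>\<phi> \<psi> :: 'h. \<phi> \<noteq> 0 \<longrightarrow> \<psi> \<noteq> 0 \<longrightarrow>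
           (cinner \<phi> \<psi> = 0 \<longleftrightarrow> rays_orth (fs (ray \<phi>)) (fs (ray \<psi>)))"
proof (intro allI impI)
  fix \<phi> \<psi> :: 'h assume "\<phi> \<noteq> 0" "\<psi> \<noteq> 0"
  then have P: "ray \<phi> \<in> rays_P" "ray \<psi> \<in> rays_P" unfolding rays_P_def by blast+
  have fsP: "fs (ray \<phi>) \<in> rays_P" "fs (ray \<psi>) \<in> rays_P"
    using assms(1) P unfolding chu_morphism_def by blast+
  then have fs\<psi>L: "fs (ray \<psi>) \<in> subspaces_L" using rays_P_subset_subspaces_L by blast
  have pullback: "fa (fs (ray \<psi>)) = ray \<psi>"
    by (rule chu_morphism_pullback_image_ray[OF assms \<open>\<psi> \<noteq> 0\<close>])
  have "cinner \<phi> \<psi> = 0 \<longleftrightarrow> rays_orth (ray \<psi>) (ray \<phi>)"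
    by (simp add: rays_orth_commute rays_orth_ray_iff)
  also have "\<dots> \<longleftrightarrow> ebar (ray \<phi>) (fa (fs (ray \<psi>))) = 0"
    unfolding pullback using ebar_eq_0_iff[OF P(1)] P(2) rays_P_subset_subspaces_L by blast
  also have "\<dots> \<longleftrightarrow> ebar (fs (ray \<phi>)) (fs (ray \<psi>)) = 0"
    using assms(1) P(1) fs\<psi>L unfolding chu_morphism_def by simp
  also have "\<dots> \<longleftrightarrow> rays_orth (fs (ray \<phi>)) (fs (ray \<psi>))"
    using ebar_eq_0_iff[OF fsP(1) fs\<psi>L] rays_orth_commute by blast
  finally show "cinner \<phi> \<psi> = 0 \<longleftrightarrow> rays_orth (fs (ray \<phi>)) (fs (ray \<psi>))" .
qed

end
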